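(* Let $\Gamma$ be a $\Theta$-Anosov subgroup of $G$. Then \[\delta_{1,2}(\rho_\Theta(\Gamma))=\sup_{\theta\in\Theta}\delta_\theta(\Gamma).\]
   Context: $G$ is a semisimple Lie group with finite center, with fixed maximal compact $K$, Cartan subspace $\mathfrak{a}$, closed Weyl chamber $\mathfrak{a}_+$, simple roots $\Delta^s$, Cartan projection $\mu:G\to\mathfrak{a}_+$ ($g\in K\exp(\mu(g))K$); $\Theta\subset\Delta^s$ non-empty. A finitely generated $\Gamma\subset G$ is $\Theta$-Anosov if there are $C,C'>0$ with $\theta(\mu(g))\ge C|g|-C'$ for all $g\in\Gamma,\theta\in\Theta$ ($|g|$ word length). $\rho_\Theta=\bigotimes_{\theta\in\Theta}\rho_\theta:G\to\mathrm{SL}(\bigotimes_{\theta\in\Theta}V_\theta)$ is the tensor product of the fundamental representations $\rho_\theta$; it satisfies $\mu_1(\rho_\Theta(g))-\mu_2(\rho_\Theta(g))=\min_{\theta\in\Theta}\theta(\mu(g))$ for all $g\in G$, where for a matrix $\mu_i$ denotes the log of its $i$-th singular value. Here $\delta_{1,2}(\rho_\Theta(\Gamma))=\limsup_{R\to\infty}\frac1R\log\#\{\gamma\in\Gamma:(\mu_1-\mu_2)(\rho_\Theta(\gamma))\le R\}$ and $\delta_\theta(\Gamma)=\limsup_{R\to\infty}\frac1R\log\#\{\gamma\in\Gamma:\theta(\mu(\gamma))\le R\}$. *)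

theory Defs
  imports "HOL-Algebra.Generated_Groups" "HOL-Analysis.Analysis"
begin

definition word_length :: "('g, 'b) monoid_scheme \<Rightarrow> 'g set \<Rightarrow> 'g \<Rightarrow> nat" where
  "word_length G S g = (LEAST n. \<exists>xs. length xs = n \<and>
      set xs \<subseteq> S \<union> m_inv G ` S \<and> foldr (\<lambda>a b. a \<otimes>\<^bsub>G\<^esub> b) xs \<one>\<^bsub>G\<^esub> = g)"

definition Theta_Anosov ::
  "('g, 'b) monoid_scheme \<Rightarrow> 'g set \<Rightarrow> ('g \<Rightarrow> 'a) \<Rightarrow> ('a \<Rightarrow> real) set \<Rightarrow> bool" where
  "Theta_Anosov G \<Gamma> \<mu> \<Theta> \<longleftrightarrow>
     (\<exists>S. finite S \<and> S \<subseteq> carrier G \<and> generate G S = \<Gamma> \<and>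
        (\<exists>C C'. C > 0 \<and> C' > 0 \<and>
           (\<forall>g\<in>\<Gamma>. \<forall>\<theta>\<in>\<Theta>. \<theta> (\<mu> g) \<ge> C * real (word_length G S g) - C')))"

definition log_count :: "'g set \<Rightarrow> ereal" where
  "log_count A = (if finite A then ereal (ln (real (card A))) else \<infinity>)"

definition growth_exp :: "'g set \<Rightarrow> ('g \<Rightarrow> real) \<Rightarrow> ereal" where
  "growth_exp X f = Limsup at_top (\<lambda>R::real. log_count {x\<in>X. f x \<le> R} / ereal R)"

text \<open>Largest and second largest singular values of a real square matrix
  (operator norm, and Courant--Fischer min-max), and mu_1 - mu_2 (log singular value gap).\<close>
definition sv1 :: "real^'n^'n \<Rightarrow> real" where
  "sv1 A = onorm ((*v) A)"

definition sv2 :: "real^'n^'n \<Rightarrow> real" where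
  "sv2 A = (INF v\<in>{v::real^'n. norm v = 1}.
              SUP x\<in>{x. norm x = 1 \<and> inner x v = 0}. norm (A *v x))"

definition mu12 :: "real^'n^'n \<Rightarrow> real" where
  "mu12 A = ln (sv1 A) - ln (sv2 A)"

end

theory Submission
  imports Defs
begin

text \<open>Since \<open>\<mu>\<^sub>1 - \<mu>\<^sub>2\<close> of \<open>\<rho>\<^sub>\<Theta>(\<gamma>)\<close> is the minimum of the finitely many
  quantities \<open>\<theta>(\<mu>(\<gamma>))\<close>, the sublevel set of the gap at level \<open>R\<close> is the union of the
  sublevel sets of the \<open>\<theta>\<close>. Hence its cardinality lies between the largest of them and
  \<open>|\<Theta>|\<close> times the largest, and the factor \<open>|\<Theta>|\<close> disappears in the limit
  \<open>(1/R) log\<close>.\<close>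

lemma ln_of_nat_mono:
  fixes m n :: nat
  assumes "m \<le> n"
  shows "ln (real m) \<le> ln (real n)"
proof (cases "m = 0")
  case True
  then show ?thesis by (cases "n = 0") auto
next
  case False
  then show ?thesis using assms by (subst ln_le_cancel_iff) auto
qed

lemma log_count_mono:
  assumes "A \<subseteq> B"
  shows "log_count A \<le> log_count B"
proof (cases "finite B")
  case True
  with assms have "finite A" "card A \<le> card B"
    by (auto intro: finite_subset card_mono)
  with True show ?thesis by (simp add: log_count_def ln_of_nat_mono)
qed (simp add: log_count_def)

lemma log_count_UN_le:
  assumes "finite I" "I \<noteq> {}"
  shows "\<exists>i\<in>I. log_count (\<Union>i\<in>I. A i) \<le> ereal (ln (real (card I))) + log_count (A i)"
proof (cases "\<exists>i\<in>I. infinite (A i)")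
  case True
  then show ?thesis by (auto simp: log_count_def)
next
  case False
  then have finA: "\<forall>i\<in>I. finite (A i)" by blast
  have "Max ((\<lambda>i. card (A i)) ` I) \<in> (\<lambda>i. card (A i)) ` I"
    using assms by (intro Max_in) auto
  then obtain i0 where "i0 \<in> I" "card (A i0) = Max ((\<lambda>i. card (A i)) ` I)"
    by auto
  with assms(1) have i0: "i0 \<in> I" "\<forall>i\<in>I. card (A i) \<le> card (A i0)"
    by auto
  have "card (\<Union>i\<in>I. A i) \<le> (\<Sum>i\<in>I. card (A i))"
    using assms(1) by (rule card_UN_le)
  also have "\<dots> \<le> card I * card (A i0)"
    using sum_bounded_above[of I "\<lambda>i. card (A i)" "card (A i0)"] i0(2) by simp
  finally have card_le: "card (\<Union>i\<in>I. A i) \<le> card I * card (A i0)" .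
  have card_I: "card I > 0" using assms by (simp add: card_gt_0_iff)
  have "ln (real (card (\<Union>i\<in>I. A i))) \<le> ln (real (card I)) + ln (real (card (A i0)))"
  proof (cases "card (A i0) = 0")
    case True
    then show ?thesis using card_le card_I by simp
  next
    case False
    then have "ln (real (card (\<Union>i\<in>I. A i))) \<le> ln (real (card I * card (A i0)))"
      using ln_of_nat_mono[OF card_le] by blast
    also have "\<dots> = ln (real (card I)) + ln (real (card (A i0)))"
      using card_I False by (simp add: ln_mult)
    finally show ?thesis .
  qed
  then show ?thesis using assms(1) finA i0(1)
    by (intro bexI[OF _ i0(1)]) (simp add: log_count_def)
qed

lemma Limsup_at_top_le_SUP_finite:
  fixes F :: "real \<Rightarrow> ereal" and h :: "'i \<Rightarrow> real \<Rightarrow> ereal"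
  assumes "finite I"
    and bound: "eventually (\<lambda>R. \<exists>i\<in>I. F R \<le> ereal (c / R) + h i R) at_top"
  shows "Limsup at_top F \<le> (SUP i\<in>I. Limsup at_top (h i))"
  unfolding Limsup_le_iff
proof (intro allI impI)
  define M where "M = (SUP i\<in>I. Limsup at_top (h i))"
  fix y assume "M < y"
  then obtain r where "M < ereal r" and r_y: "ereal r < y"
    using ereal_dense2 by blast
  then obtain r' where r: "M < ereal r'" "r' < r"
    using ereal_dense2 by fastforce
  have "eventually (\<lambda>R. h i R < ereal r') at_top" if "i \<in> I" for i
  proof (rule Limsup_lessD)
    have "Limsup at_top (h i) \<le> M" unfolding M_def using that by (rule SUP_upper)
    then show "Limsup at_top (h i) < ereal r'" using r(1) by simp
  qed
  then have small_h: "eventually (\<lambda>R. \<forall>i\<in>I. h i R < ereal r') at_top"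
    using assms(1) by (simp add: eventually_ball_finite)
  have "((\<lambda>R::real. c / R) \<longlongrightarrow> 0) at_top"
    by (intro tendsto_divide_0[OF tendsto_const] filterlim_at_top_imp_at_infinity[OF filterlim_ident])
  then have small_c: "eventually (\<lambda>R. c / R < r - r') at_top"
    using r(2) by (intro order_tendstoD) auto
  show "eventually (\<lambda>R. F R < y) at_top"
    using small_h small_c bound
  proof eventually_elim
    case (elim R)
    then obtain i where "i \<in> I" and "F R \<le> ereal (c / R) + h i R" by blast
    note \<open>F R \<le> ereal (c / R) + h i R\<close>
    also have "\<dots> < ereal (c / R) + ereal r'"
      using elim(1) \<open>i \<in> I\<close> by (intro ereal_less_add) auto
    also have "\<dots> < y"
      using elim(2) r_y less_trans[of "ereal (c / R + r')" "ereal r" y] by simp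
    finally show ?case .
  qed
qed

lemma growth_exp_cong:
  assumes "\<And>x. x \<in> X \<Longrightarrow> f x = g x"
  shows "growth_exp X f = growth_exp X g"
proof -
  have "{x\<in>X. f x \<le> R} = {x\<in>X. g x \<le> R}" for R using assms by auto
  then show ?thesis by (simp add: growth_exp_def)
qed

lemma growth_exp_Min:
  fixes f :: "'i \<Rightarrow> 'g \<Rightarrow> real"
  assumes "finite I" "I \<noteq> {}"
  shows "growth_exp X (\<lambda>x. Min ((\<lambda>i. f i x) ` I)) = (SUP i\<in>I. growth_exp X (f i))"
proof -
  define F where "F R = log_count {x\<in>X. Min ((\<lambda>i. f i x) ` I) \<le> R} / ereal R" for R
  define h where "h i R = log_count {x\<in>X. f i x \<le> R} / ereal R" for i R
  have sublevel_UN: "{x\<in>X. Min ((\<lambda>i. f i x) ` I) \<le> R} = (\<Union>i\<in>I. {x\<in>X. f i x \<le> R})" for R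
    using assms by (auto simp: Min_le_iff)
  have "eventually (\<lambda>R. h i R \<le> F R) at_top" if "i \<in> I" for i
    using eventually_gt_at_top[of 0]
  proof eventually_elim
    case (elim R)
    have "{x\<in>X. f i x \<le> R} \<subseteq> (\<Union>i\<in>I. {x\<in>X. f i x \<le> R})" using that by blast
    then show ?case using elim
      unfolding h_def F_def sublevel_UN by (intro ereal_divide_right_mono log_count_mono) auto
  qed
  then have "(SUP i\<in>I. Limsup at_top (h i)) \<le> Limsup at_top F"
    by (intro SUP_least Limsup_mono)
  moreover have "eventually (\<lambda>R. \<exists>i\<in>I. F R \<le> ereal (ln (real (card I)) / R) + h i R) at_top"
    using eventually_gt_at_top[of 0]
  proof eventually_elim
    case (elim R)
    obtain i where i: "i \<in> I" and bound:
      "log_count (\<Union>i\<in>I. {x\<in>X. f i x \<le> R})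
         \<le> ereal (ln (real (card I))) + log_count {x\<in>X. f i x \<le> R}"
      using log_count_UN_le[OF assms] by blast
    have "F R \<le> (ereal (ln (real (card I))) + log_count {x\<in>X. f i x \<le> R}) / ereal R"
      unfolding F_def sublevel_UN using bound elim by (intro ereal_divide_right_mono) auto
    also have "\<dots> = ereal (ln (real (card I)) / R) + h i R"
      unfolding h_def using elim
      by (cases "log_count {x\<in>X. f i x \<le> R}") (auto simp: add_divide_distrib)
    finally show ?case using i by blast
  qed
  then have "Limsup at_top F \<le> (SUP i\<in>I. Limsup at_top (h i))"
    by (rule Limsup_at_top_le_SUP_finite[OF assms(1)])
  ultimately show ?thesis
    unfolding growth_exp_def F_def[abs_def] h_def[abs_def] by (blast intro: order.antisym)
qed

theorem lemma2p39:
  fixes G :: "('g, 'b) monoid_scheme"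
    and \<Gamma> :: "'g set"
    and \<mu> :: "'g \<Rightarrow> 'a::euclidean_space"
    and \<Theta> :: "('a \<Rightarrow> real) set"
    and \<rho> :: "'g \<Rightarrow> real^'n^'n"
  assumes "group G"
    and "subgroup \<Gamma> G"
    and "finite \<Theta>" and "\<Theta> \<noteq> {}"
    and "\<forall>\<theta>\<in>\<Theta>. linear \<theta>"
    and "CARD('n) \<ge> 2"
    and "\<forall>g\<in>carrier G. \<forall>h\<in>carrier G. \<rho> (g \<otimes>\<^bsub>G\<^esub> h) = \<rho> g ** \<rho> h"
    and "\<forall>g\<in>carrier G. det (\<rho> g) = 1"
    and "\<forall>g\<in>carrier G. mu12 (\<rho> g) = Min ((\<lambda>\<theta>. \<theta> (\<mu> g)) ` \<Theta>)"
    and "Theta_Anosov G \<Gamma> \<mu> \<Theta>"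
  shows "growth_exp \<Gamma> (\<lambda>\<gamma>. mu12 (\<rho> \<gamma>)) = (SUP \<theta>\<in>\<Theta>. growth_exp \<Gamma> (\<lambda>\<gamma>. \<theta> (\<mu> \<gamma>)))"
proof -
  have "\<Gamma> \<subseteq> carrier G" using assms(2) by (rule subgroup.subset)
  then have "growth_exp \<Gamma> (\<lambda>\<gamma>. mu12 (\<rho> \<gamma>)) = growth_exp \<Gamma> (\<lambda>\<gamma>. Min ((\<lambda>\<theta>. \<theta> (\<mu> \<gamma>)) ` \<Theta>))"
    using assms(9) by (intro growth_exp_cong) blast
  also have "\<dots> = (SUP \<theta>\<in>\<Theta>. growth_exp \<Gamma> (\<lambda>\<gamma>. \<theta> (\<mu> \<gamma>)))"
    using assms(3,4) by (rule growth_exp_Min)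
  finally show ?thesis .
qed

end
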